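(* Let $L\ge1$ and consider a continuous-time Markov chain on $\{0,\dots,L\}$ with jump rates $q(\cdot,\cdot)$, reversible with respect to a probability measure $p$. Assume that for some $\alpha,\beta>0$: (a) $\min_{n\in\{1,\dots,L\}}\max\big(q(n,n-1),q(n-1,n)\big)\ge\alpha$; (b) for every $n\in\{0,\dots,L\}$, $\min\big(\sum_{m\le n}p(m),\ \sum_{m\ge n}p(m)\big)\le\beta\,p(n)$. Then the relaxation time (inverse spectral gap) of the chain is at most $\beta L/\alpha$. *)

theory Defs
  imports Complex_Main
begin

definition rate_matrix :: "nat \<Rightarrow> (nat \<Rightarrow> nat \<Rightarrow> real) \<Rightarrow> bool" where
  "rate_matrix L q \<longleftrightarrow> (\<forall>n\<in>{0..L}. \<forall>m\<in>{0..L}. n \<noteq> m \<longrightarrow> q n m \<ge> 0)"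

definition prob_on :: "nat \<Rightarrow> (nat \<Rightarrow> real) \<Rightarrow> bool" where
  "prob_on L p \<longleftrightarrow> (\<forall>n\<in>{0..L}. p n > 0) \<and> (\<Sum>n=0..L. p n) = 1"

definition reversible :: "nat \<Rightarrow> (nat \<Rightarrow> real) \<Rightarrow> (nat \<Rightarrow> nat \<Rightarrow> real) \<Rightarrow> bool" where
  "reversible L p q \<longleftrightarrow> (\<forall>n\<in>{0..L}. \<forall>m\<in>{0..L}. p n * q n m = p m * q m n)"

definition dirichlet_form :: "nat \<Rightarrow> (nat \<Rightarrow> real) \<Rightarrow> (nat \<Rightarrow> nat \<Rightarrow> real) \<Rightarrow> (nat \<Rightarrow> real) \<Rightarrow> real" where
  "dirichlet_form L p q f =
     (1/2) * (\<Sum>n=0..L. \<Sum>m\<in>{0..L}-{n}. p n * q n m * (f n - f m)^2)"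

definition variance_p :: "nat \<Rightarrow> (nat \<Rightarrow> real) \<Rightarrow> (nat \<Rightarrow> real) \<Rightarrow> real" where
  "variance_p L p f = (\<Sum>n=0..L. p n * (f n)^2) - (\<Sum>n=0..L. p n * f n)^2"

definition spectral_gap :: "nat \<Rightarrow> (nat \<Rightarrow> real) \<Rightarrow> (nat \<Rightarrow> nat \<Rightarrow> real) \<Rightarrow> real" where
  "spectral_gap L p q =
     Inf {dirichlet_form L p q f / variance_p L p f | f. variance_p L p f \<noteq> 0}"

definition relaxation_time :: "nat \<Rightarrow> (nat \<Rightarrow> real) \<Rightarrow> (nat \<Rightarrow> nat \<Rightarrow> real) \<Rightarrow> real" where
  "relaxation_time L p q = 1 / spectral_gap L p q"

end

theory Submission
  imports Defs "HOL-Analysis.Convex"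
begin

text \<open>Pick a median k of p. Writing f n - f k as a telescoping sum of nearest-neighbour
  increments and applying Cauchy-Schwarz along a path of length at most L bounds the variance of f
  by L times the sum over edges (e, e+1) of (f (e+1) - f e)^2 weighted by the mass on the far side
  of the edge as seen from k. Because k is a median, this mass is at most both the head and the
  tail sum at either endpoint of the edge, hence by (b) at most \<beta> times the smaller endpoint
  weight; by (a) and reversibility, \<alpha> times that weight is at most the edge conductance
  p (e+1) q (e+1, e). So the nearest-neighbour part of the Dirichlet form is at least
  \<alpha> / (\<beta> L) times the variance.\<close>

lemma sum_sq_dev_eq_variance_p:
  assumes "(\<Sum>n=0..L. p n) = 1"
  shows "(\<Sum>n=0..L. p n * (f n - c)^2) = variance_p L p f + ((\<Sum>n=0..L. p n * f n) - c)^2"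
  unfolding variance_p_def
  by (simp add: power2_diff algebra_simps sum.distrib sum_subtractf sum_distrib_left
      flip: sum_distrib_right) (simp add: assms)

lemma variance_p_nonneg:
  assumes "prob_on L p"
  shows "variance_p L p f \<ge> 0"
proof -
  have "variance_p L p f = (\<Sum>n=0..L. p n * (f n - (\<Sum>n=0..L. p n * f n))^2)"
    using assms by (simp add: sum_sq_dev_eq_variance_p prob_on_def)
  also have "\<dots> \<ge> 0"
    using assms by (auto simp: prob_on_def intro!: sum_nonneg mult_nonneg_nonneg)
  finally show ?thesis .
qed

lemma head_add_tail:
  fixes p :: "nat \<Rightarrow> 'a::comm_monoid_add"
  assumes "e < L"
  shows "(\<Sum>m=0..e. p m) + (\<Sum>m=Suc e..L. p m) = (\<Sum>m=0..L. p m)"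
proof -
  have "{0..L} = {0..e} \<union> {Suc e..L}" using assms by auto
  then show ?thesis by (simp add: sum.union_disjoint flip: ivl_disj_int)
qed

lemma exists_median:
  assumes "(\<Sum>n=0..L. p n) = (1::real)"
  obtains k :: nat where "k \<le> L" "1/2 \<le> (\<Sum>m=0..k. p m)" "1/2 \<le> (\<Sum>m=k..L. p m)"
proof -
  define k where "k = (LEAST k. 1/2 \<le> (\<Sum>m=0..k. p m))"
  have head: "1/2 \<le> (\<Sum>m=0..k. p m)" and "k \<le> L"
    unfolding k_def using assms by (auto intro: LeastI[of _ L] Least_le[of _ L])
  moreover have "1/2 \<le> (\<Sum>m=k..L. p m)"
  proof (cases k)
    case 0
    then show ?thesis using assms by simp
  next
    case (Suc j)
    then have "(\<Sum>m=0..j. p m) < 1/2"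
      using not_less_Least[of j "\<lambda>k. 1/2 \<le> (\<Sum>m=0..k. p m)"] unfolding k_def by simp
    moreover have "(\<Sum>m=0..j. p m) + (\<Sum>m=k..L. p m) = 1"
      using head_add_tail[of j L p] assms Suc \<open>k \<le> L\<close> by simp
    ultimately show ?thesis by simp
  qed
  ultimately show ?thesis using that by blast
qed

lemma square_diff_le_sum_square_increments:
  fixes f :: "nat \<Rightarrow> real"
  shows "(f n - f k)^2 \<le> real (max n k - min n k) * (\<Sum>e=min n k..<max n k. (f (Suc e) - f e)^2)"
proof -
  have "(f n - f k)^2 = (\<Sum>e=min n k..<max n k. f (Suc e) - f e)^2"
    by (cases "n \<le> k") (simp_all add: sum_Suc_diff' max_def min_def power2_commute)
  also have "\<dots> \<le> (\<Sum>e=min n k..<max n k. (f (Suc e) - f e)^2) * real (max n k - min n k)"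
    using sum_squared_le_sum_of_squares[of "\<lambda>e. f (Suc e) - f e" "{min n k..<max n k}"] by simp
  finally show ?thesis by (simp add: mult.commute)
qed

text \<open>The total weight of the states whose path to k crosses the edge (e, e+1).\<close>
definition mass_beyond_edge :: "nat \<Rightarrow> (nat \<Rightarrow> real) \<Rightarrow> nat \<Rightarrow> nat \<Rightarrow> real" where
  "mass_beyond_edge L p k e = (if e < k then (\<Sum>m=0..e. p m) else (\<Sum>m=Suc e..L. p m))"

lemma mass_beyond_edge_eq_sum_crossing:
  assumes "e < L" "k \<le> L"
  shows "(\<Sum>n=0..L. if min n k \<le> e \<and> e < max n k then p n else 0) = mass_beyond_edge L p k e"
proof -
  have "{n \<in> {0..L}. min n k \<le> e \<and> e < max n k} = (if e < k then {0..e} else {Suc e..L})"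
    using assms by auto
  then show ?thesis
    unfolding mass_beyond_edge_def by (simp add: sum.inter_filter[symmetric])
qed

lemma sum_sq_dev_le_edge_sum:
  fixes f :: "nat \<Rightarrow> real"
  assumes "k \<le> L" "\<forall>n\<in>{0..L}. p n \<ge> 0"
  shows "(\<Sum>n=0..L. p n * (f n - f k)^2)
           \<le> real L * (\<Sum>e<L. mass_beyond_edge L p k e * (f (Suc e) - f e)^2)"
proof -
  define D where "D e = (f (Suc e) - f e)^2" for e
  define crosses where "crosses n e \<longleftrightarrow> min n k \<le> e \<and> e < max n k" for n e
  have path: "(\<Sum>e=min n k..<max n k. D e) = (\<Sum>e<L. if crosses n e then D e else 0)"
    if "n \<le> L" for n
  proof -
    have "{min n k..<max n k} = {e \<in> {..<L}. crosses n e}"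
      using that assms(1) unfolding crosses_def by auto
    then show ?thesis by (simp only: sum.inter_filter[OF finite_lessThan])
  qed
  have "(\<Sum>n=0..L. p n * (f n - f k)^2) \<le> (\<Sum>n=0..L. p n * (real L * (\<Sum>e=min n k..<max n k. D e)))"
  proof (intro sum_mono mult_left_mono)
    fix n assume "n \<in> {0..L}"
    then have "real (max n k - min n k) \<le> real L" using assms(1) by auto
    moreover have "0 \<le> (\<Sum>e=min n k..<max n k. D e)" unfolding D_def by (simp add: sum_nonneg)
    ultimately show "(f n - f k)^2 \<le> real L * (\<Sum>e=min n k..<max n k. D e)"
      using square_diff_le_sum_square_increments[of f n k] unfolding D_def
      by (meson mult_right_mono order_trans)
  qed (use assms(2) in auto)
  also have "\<dots> = real L * (\<Sum>n=0..L. \<Sum>e<L. if crosses n e then p n * D e else 0)"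
    by (simp add: path sum_distrib_left if_distrib mult.left_commute cong: if_cong)
  also have "\<dots> = real L * (\<Sum>e<L. (\<Sum>n=0..L. if crosses n e then p n else 0) * D e)"
    by (subst sum.swap) (auto simp: sum_distrib_right intro!: sum.cong)
  also have "\<dots> = real L * (\<Sum>e<L. mass_beyond_edge L p k e * D e)"
    using mass_beyond_edge_eq_sum_crossing[OF _ assms(1)] unfolding crosses_def by simp
  finally show ?thesis unfolding D_def .
qed

lemma mass_beyond_edge_le_head_tail:
  assumes nonneg: "\<forall>n\<in>{0..L}. p n \<ge> 0" and total: "(\<Sum>n=0..L. p n) = 1"
    and median: "k \<le> L" "1/2 \<le> (\<Sum>m=0..k. p m)" "1/2 \<le> (\<Sum>m=k..L. p m)"
    and edge: "e < L" "n \<in> {e, Suc e}"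
  shows "mass_beyond_edge L p k e \<le> min (\<Sum>m=0..n. p m) (\<Sum>m=n..L. p m)"
proof -
  have head_mono: "(\<Sum>m=0..a. p m) \<le> (\<Sum>m=0..b. p m)" if "a \<le> b" "b \<le> L" for a b
    using that nonneg by (intro sum_mono2) auto
  have tail_mono: "(\<Sum>m=b..L. p m) \<le> (\<Sum>m=a..L. p m)" if "a \<le> b" for a b
    using that nonneg by (intro sum_mono2) auto
  have split: "(\<Sum>m=0..e. p m) + (\<Sum>m=Suc e..L. p m) = 1"
    using head_add_tail[OF edge(1), of p] total by simp
  show ?thesis
  proof (cases "e < k")
    case True
    then have "(\<Sum>m=0..e. p m) \<le> 1/2"
      using split tail_mono[of "Suc e" k] median by simp
    moreover have "(\<Sum>m=k..L. p m) \<le> (\<Sum>m=n..L. p m)"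
      using True edge by (intro tail_mono) auto
    ultimately show ?thesis
      using True edge median head_mono[of e n] unfolding mass_beyond_edge_def by auto
  next
    case False
    then have "(\<Sum>m=Suc e..L. p m) \<le> 1/2"
      using split head_mono[of k e] median edge by simp
    moreover have "(\<Sum>m=0..k. p m) \<le> (\<Sum>m=0..n. p m)"
      using False edge by (intro head_mono) auto
    ultimately show ?thesis
      using False edge median tail_mono[of n "Suc e"] unfolding mass_beyond_edge_def by auto
  qed
qed

lemma edge_conductance_ge:
  assumes "reversible L p q" "\<forall>n\<in>{0..L}. p n \<ge> 0" "e < L"
    and "0 \<le> \<alpha>" "\<alpha> \<le> max (q (Suc e) e) (q e (Suc e))"
  shows "\<alpha> * min (p e) (p (Suc e)) \<le> p (Suc e) * q (Suc e) e"
proof (cases "\<alpha> \<le> q (Suc e) e")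
  case True
  have "\<alpha> * min (p e) (p (Suc e)) \<le> \<alpha> * p (Suc e)"
    using assms(4) by (intro mult_left_mono) auto
  also have "\<dots> \<le> p (Suc e) * q (Suc e) e"
    using mult_right_mono[OF True, of "p (Suc e)"] assms(2,3) by (simp add: mult.commute)
  finally show ?thesis .
next
  case False
  then have "\<alpha> \<le> q e (Suc e)" using assms(5) by linarith
  have "\<alpha> * min (p e) (p (Suc e)) \<le> \<alpha> * p e"
    using assms(4) by (intro mult_left_mono) auto
  also have "\<dots> \<le> p e * q e (Suc e)"
    using mult_right_mono[OF \<open>\<alpha> \<le> q e (Suc e)\<close>, of "p e"] assms(2,3) by (simp add: mult.commute)
  also have "\<dots> = p (Suc e) * q (Suc e) e"
    using assms(1,3) unfolding reversible_def by simp
  finally show ?thesis .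
qed

lemma dirichlet_form_ge_nearest_neighbour:
  assumes "rate_matrix L q" "\<forall>n\<in>{0..L}. p n \<ge> 0" "reversible L p q"
  shows "(\<Sum>e<L. p (Suc e) * q (Suc e) e * (f (Suc e) - f e)^2) \<le> dirichlet_form L p q f"
proof -
  define g where "g = (\<lambda>(n, m). p n * q n m * (f n - f m)^2)"
  define S where "S = Sigma {0..L} (\<lambda>n. {0..L} - {n})"
  define down where "down = (\<lambda>e. (Suc e, e)) ` {..<L}"
  define up where "up = (\<lambda>e. (e, Suc e)) ` {..<L}"
  have edge_term: "g (e, Suc e) = g (Suc e, e)" if "e < L" for e
    using assms(3) that unfolding g_def reversible_def by (simp add: power2_commute)
  have "2 * (\<Sum>e<L. g (Suc e, e)) = (\<Sum>x\<in>down. g x) + (\<Sum>x\<in>up. g x)"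
    unfolding down_def up_def by (simp add: sum.reindex inj_on_def edge_term)
  also have "\<dots> = (\<Sum>x\<in>down \<union> up. g x)"
    unfolding down_def up_def by (rule sum.union_disjoint[symmetric]) auto
  also have "\<dots> \<le> (\<Sum>x\<in>S. g x)"
    using assms(1,2) unfolding down_def up_def S_def g_def rate_matrix_def
    by (intro sum_mono2) auto
  also have "\<dots> = (\<Sum>n=0..L. \<Sum>m\<in>{0..L}-{n}. p n * q n m * (f n - f m)^2)"
    unfolding S_def g_def by (simp add: sum.Sigma)
  finally show ?thesis unfolding dirichlet_form_def g_def by simp
qed

lemma exists_variance_p_ne_zero:
  assumes "prob_on L p" "L \<ge> 1"
  shows "\<exists>f. variance_p L p f \<noteq> 0"
proof
  define f :: "nat \<Rightarrow> real" where "f n = (if n = 0 then 1 else 0)" for n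
  have square: "(f n)^2 = f n" for n
    unfolding f_def by simp
  have mean: "(\<Sum>n=0..L. p n * f n) = p 0"
    unfolding f_def by (simp add: if_distrib cong: if_cong)
  have "variance_p L p f = p 0 * (1 - p 0)"
    unfolding variance_p_def square mean by (simp add: power2_eq_square algebra_simps)
  moreover have "(\<Sum>n\<in>{0, 1}. p n) \<le> (\<Sum>n=0..L. p n)"
    using assms by (intro sum_mono2) (auto simp: prob_on_def less_imp_le)
  ultimately show "variance_p L p f \<noteq> 0"
    using assms(1,2) unfolding prob_on_def by force
qed

lemma relaxation_time_le_poincare_constant:
  assumes "prob_on L p" "L \<ge> 1" "C > 0"
    and poincare: "\<And>f. variance_p L p f \<le> C * dirichlet_form L p q f"
  shows "relaxation_time L p q \<le> C"
proof -
  have "1 / C \<le> dirichlet_form L p q f / variance_p L p f" if "variance_p L p f \<noteq> 0" for f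
    using that variance_p_nonneg[OF assms(1), of f] poincare[of f] \<open>C > 0\<close>
    by (simp add: field_simps)
  then have gap: "1 / C \<le> spectral_gap L p q"
    unfolding spectral_gap_def using exists_variance_p_ne_zero[OF assms(1,2)]
    by (intro cInf_greatest) auto
  moreover have "0 < spectral_gap L p q"
    using gap \<open>C > 0\<close> by (simp add: order_less_le_trans[of 0 "1 / C"])
  ultimately have "1 / spectral_gap L p q \<le> 1 / (1 / C)"
    using \<open>C > 0\<close> by (intro divide_left_mono) auto
  then show ?thesis
    unfolding relaxation_time_def by simp
qed

lemma poincare_inequality:
  fixes f :: "nat \<Rightarrow> real"
  assumes "rate_matrix L q" "prob_on L p" "reversible L p q" "\<alpha> > 0" "\<beta> \<ge> 0"
    and rates: "\<forall>n\<in>{1..L}. max (q n (n - 1)) (q (n - 1) n) \<ge> \<alpha>"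
    and masses: "\<forall>n\<in>{0..L}. min (\<Sum>m=0..n. p m) (\<Sum>m=n..L. p m) \<le> \<beta> * p n"
  shows "variance_p L p f \<le> \<beta> * real L / \<alpha> * dirichlet_form L p q f"
proof -
  have nonneg: "\<forall>n\<in>{0..L}. p n \<ge> 0" and total: "(\<Sum>n=0..L. p n) = 1"
    using assms(2) unfolding prob_on_def by (auto simp: less_imp_le)
  obtain k where median: "k \<le> L" "1/2 \<le> (\<Sum>m=0..k. p m)" "1/2 \<le> (\<Sum>m=k..L. p m)"
    using exists_median[OF total] by blast
  define c where "c e = p (Suc e) * q (Suc e) e" for e
  have edge: "mass_beyond_edge L p k e \<le> \<beta> / \<alpha> * c e" if "e < L" for e
  proof -
    have "mass_beyond_edge L p k e \<le> \<beta> * p n" if "n \<in> {e, Suc e}" for n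
      using mass_beyond_edge_le_head_tail[OF nonneg total median \<open>e < L\<close> that]
        masses[rule_format, of n] \<open>e < L\<close> that by auto
    then have "\<alpha> * mass_beyond_edge L p k e \<le> \<alpha> * (\<beta> * min (p e) (p (Suc e)))"
      using \<open>\<alpha> > 0\<close> by (simp add: min_def)
    also have "\<dots> = \<beta> * (\<alpha> * min (p e) (p (Suc e)))"
      by (simp add: mult_ac)
    also have "\<dots> \<le> \<beta> * c e"
      unfolding c_def using rates[rule_format, of "Suc e"] that \<open>\<alpha> > 0\<close> \<open>\<beta> \<ge> 0\<close>
      by (intro mult_left_mono edge_conductance_ge[OF assms(3) nonneg]) auto
    finally show ?thesis
      using \<open>\<alpha> > 0\<close> by (simp add: field_simps)
  qed
  have "variance_p L p f \<le> (\<Sum>n=0..L. p n * (f n - f k)^2)"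
    using sum_sq_dev_eq_variance_p[OF total] by simp
  also have "\<dots> \<le> real L * (\<Sum>e<L. mass_beyond_edge L p k e * (f (Suc e) - f e)^2)"
    using sum_sq_dev_le_edge_sum[OF median(1) nonneg] .
  also have "\<dots> \<le> real L * (\<Sum>e<L. \<beta> / \<alpha> * c e * (f (Suc e) - f e)^2)"
    using edge by (intro mult_left_mono sum_mono mult_right_mono) auto
  also have "\<dots> = \<beta> * real L / \<alpha> * (\<Sum>e<L. c e * (f (Suc e) - f e)^2)"
    by (simp add: sum_distrib_left mult_ac)
  also have "\<dots> \<le> \<beta> * real L / \<alpha> * dirichlet_form L p q f"
    unfolding c_def using dirichlet_form_ge_nearest_neighbour[OF assms(1) nonneg assms(3)] assms(4,5)
    by (intro mult_left_mono) auto
  finally show ?thesis .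
qed

theorem lemma4p8:
  fixes L :: nat and p :: "nat \<Rightarrow> real" and q :: "nat \<Rightarrow> nat \<Rightarrow> real"
    and \<alpha> \<beta> :: real
  assumes "L \<ge> 1"
    and "rate_matrix L q"
    and "prob_on L p"
    and "reversible L p q"
    and "\<alpha> > 0" and "\<beta> > 0"
    and "\<forall>n\<in>{1..L}. max (q n (n - 1)) (q (n - 1) n) \<ge> \<alpha>"
    and "\<forall>n\<in>{0..L}. min (\<Sum>m=0..n. p m) (\<Sum>m=n..L. p m) \<le> \<beta> * p n"
  shows "relaxation_time L p q \<le> \<beta> * real L / \<alpha>"
proof (rule relaxation_time_le_poincare_constant)
  show "variance_p L p f \<le> \<beta> * real L / \<alpha> * dirichlet_form L p q f" for f
    using assms by (intro poincare_inequality) auto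
qed (use assms in auto)

end
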